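(* Let $\tau$ be a strongly $(n,p;a,c)$ regular graph with $0<c<p<n-1$, whose adjacency matrix has eigenvalues $p$, $r$ and $s$, where $r=\frac{a-c+\sqrt{(a-c)^2+4(p-c)}}{2}$ and $s=\frac{a-c-\sqrt{(a-c)^2+4(p-c)}}{2}$. Then: (1) for every odd positive integer $k$: $(rn+p-r)^k+(-n+p-r)^k p+(p-r)^k(n-p-1)\ge 0$; (2) for every odd positive integer $k$: $(rn+p-s)^k+(-n+p-s)^k p+(p-s)^k(n-p-1)\ge 0$; (3) for all positive integers $k,l$ with $k+l$ odd: $(rn+p-r)^k(rn+p-s)^l+(-n+p-r)^k(-n+p-s)^l p+(p-r)^k(p-s)^l(n-p-1)\ge 0$; (4) for every positive integer $k$ and every odd positive integer $l$: $(|s|n+s-p)^k(rn+p-s)^l+(n+s-p)^k(-n+p-s)^l p+(s-p)^k(p-s)^l(n-p-1)\ge 0$.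
   Context: A graph is strongly $(n,p;a,c)$ regular if it is a simple graph on $n$ vertices, not complete and not null, every vertex has exactly $p$ neighbours, every pair of adjacent vertices has exactly $a$ common neighbours, and every pair of distinct non-adjacent vertices has exactly $c$ common neighbours. *)

theory Defs
  imports Complex_Main
begin

definition strongly_regular ::
  "'a set \<Rightarrow> ('a \<Rightarrow> 'a \<Rightarrow> bool) \<Rightarrow> nat \<Rightarrow> nat \<Rightarrow> nat \<Rightarrow> nat \<Rightarrow> bool" where
  "strongly_regular V E n p a c \<longleftrightarrow>
     finite V \<and> card V = n \<and>
     (\<forall>x y. E x y \<longrightarrow> x \<in> V \<and> y \<in> V) \<and>
     (\<forall>x. \<not> E x x) \<and>
     (\<forall>x y. E x y \<longrightarrow> E y x) \<and>
     (\<exists>x\<in>V. \<exists>y\<in>V. x \<noteq> y \<and> \<not> E x y) \<and>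
     (\<exists>x y. E x y) \<and>
     (\<forall>x\<in>V. card {y \<in> V. E x y} = p) \<and>
     (\<forall>x\<in>V. \<forall>y\<in>V. E x y \<longrightarrow> card {z \<in> V. E x z \<and> E y z} = a) \<and>
     (\<forall>x\<in>V. \<forall>y\<in>V. x \<noteq> y \<and> \<not> E x y \<longrightarrow> card {z \<in> V. E x z \<and> E y z} = c)"

end

theory Submission
  imports Defs "HOL-Library.Nat_Bijection"
begin

text \<open>Write A for the adjacency matrix and J for the all-ones matrix. Each of the matrices
(p - r) J + r n I - n A, (p - s) J + r n I - n A and (s - p) J - s n I + n A squares to n (r - s)
times itself, so it is positive semidefinite. By the Schur product theorem so are all entrywise
powers and products of them, and the sum of the entries of a positive semidefinite matrix is
nonnegative; for u I + v A + w (J - I - A) that sum is n (u + p v + (n - p - 1) w).\<close>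

lemma sum_delta_of_bool:
  fixes f :: "'a \<Rightarrow> 'b::comm_semiring_1"
  assumes "finite A" and "x \<in> A"
  shows "(\<Sum>z\<in>A. of_bool (z = x) * f z) = f x"
proof -
  have "(\<Sum>z\<in>A. of_bool (z = x) * f z) = (\<Sum>z\<in>A. if z = x then f z else 0)"
    by (intro sum.cong) auto
  then show ?thesis using assms by simp
qed

lemma quadratic_roots_sum_prod:
  fixes b q :: real
  assumes "0 < q"
  defines "r \<equiv> (b + sqrt (b\<^sup>2 + 4 * q)) / 2" and "s \<equiv> (b - sqrt (b\<^sup>2 + 4 * q)) / 2"
  shows "r + s = b" and "r * s = - q" and "s < r" and "s < 0"
proof -
  have pos: "0 < b\<^sup>2 + 4 * q" using assms(1) by (simp add: add_nonneg_pos)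
  have "\<bar>b\<bar> < sqrt (b\<^sup>2 + 4 * q)"
    using real_sqrt_less_mono[of "b\<^sup>2" "b\<^sup>2 + 4 * q"] assms(1) by simp
  then show "r + s = b" "s < r" "s < 0"
    using pos unfolding r_def s_def by (simp_all add: field_simps)
  have "r * s = (b\<^sup>2 - sqrt (b\<^sup>2 + 4 * q) ^ 2) / 4"
    unfolding r_def s_def by (simp add: field_simps power2_eq_square)
  then show "r * s = - q"
    using pos by simp
qed

text \<open>Positive semidefiniteness of a real kernel on V, witnessed by a finite Gram
factorisation K x y = \<Sum>i. g i x * g i y.\<close>

definition gram_kernel :: "'a set \<Rightarrow> ('a \<Rightarrow> 'a \<Rightarrow> real) \<Rightarrow> bool" where
  "gram_kernel V K \<longleftrightarrow>
     (\<exists>I::nat set. \<exists>g. finite I \<and> (\<forall>x\<in>V. \<forall>y\<in>V. K x y = (\<Sum>i\<in>I. g i x * g i y)))"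

lemma gram_kernel_const_one: "gram_kernel V (\<lambda>x y. 1)"
  unfolding gram_kernel_def by (intro exI[of _ "{0}"] exI[of _ "\<lambda>i x. 1"]) simp

lemma gram_kernel_mult:
  assumes "gram_kernel V K" and "gram_kernel V L"
  shows "gram_kernel V (\<lambda>x y. K x y * L x y)"
proof -
  obtain I :: "nat set" and f where I: "finite I" "\<forall>x\<in>V. \<forall>y\<in>V. K x y = (\<Sum>i\<in>I. f i x * f i y)"
    using assms(1) unfolding gram_kernel_def by blast
  obtain J :: "nat set" and g where J: "finite J" "\<forall>x\<in>V. \<forall>y\<in>V. L x y = (\<Sum>j\<in>J. g j x * g j y)"
    using assms(2) unfolding gram_kernel_def by blast
  define h where "h t x = f (fst (prod_decode t)) x * g (snd (prod_decode t)) x" for t x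
  have "K x y * L x y = (\<Sum>t\<in>prod_encode ` (I \<times> J). h t x * h t y)" if "x \<in> V" "y \<in> V" for x y
  proof -
    have "K x y * L x y = (\<Sum>(i, j)\<in>I \<times> J. (f i x * f i y) * (g j x * g j y))"
      using I J that by (simp add: sum_product sum.cartesian_product)
    also have "\<dots> = (\<Sum>q\<in>I \<times> J. h (prod_encode q) x * h (prod_encode q) y)"
      by (rule sum.cong) (auto simp: h_def mult_ac)
    also have "\<dots> = (\<Sum>t\<in>prod_encode ` (I \<times> J). h t x * h t y)"
      by (simp add: sum.reindex[OF inj_prod_encode] comp_def)
    finally show ?thesis .
  qed
  then show ?thesis
    using I J unfolding gram_kernel_def by (intro exI[of _ "prod_encode ` (I \<times> J)"] exI[of _ h]) auto
qed

lemma gram_kernel_power: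
  assumes "gram_kernel V K"
  shows "gram_kernel V (\<lambda>x y. K x y ^ k)"
proof (induction k)
  case 0
  show ?case using gram_kernel_const_one by simp
next
  case (Suc k)
  show ?case using gram_kernel_mult[OF assms Suc.IH] by (simp only: power_Suc)
qed

lemma gram_kernel_sum_nonneg:
  assumes "finite V" and "gram_kernel V K"
  shows "0 \<le> (\<Sum>x\<in>V. \<Sum>y\<in>V. K x y)"
proof -
  obtain I :: "nat set" and g where I: "finite I" "\<forall>x\<in>V. \<forall>y\<in>V. K x y = (\<Sum>i\<in>I. g i x * g i y)"
    using assms(2) unfolding gram_kernel_def by blast
  have "(\<Sum>x\<in>V. \<Sum>y\<in>V. K x y) = (\<Sum>x\<in>V. \<Sum>y\<in>V. \<Sum>i\<in>I. g i x * g i y)"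
    using I by simp
  also have "\<dots> = (\<Sum>i\<in>I. \<Sum>x\<in>V. \<Sum>y\<in>V. g i x * g i y)"
    by (simp add: sum.swap[of _ I])
  also have "\<dots> = (\<Sum>i\<in>I. (\<Sum>x\<in>V. g i x)\<^sup>2)"
    by (simp add: power2_eq_square sum_product)
  finally show ?thesis by (simp add: sum_nonneg)
qed

lemma gram_kernel_if_square_eq:
  assumes "finite V" and "0 < \<mu>"
    and square: "\<And>x y. x \<in> V \<Longrightarrow> y \<in> V \<Longrightarrow> (\<Sum>z\<in>V. K z x * K z y) = \<mu> * K x y"
  shows "gram_kernel V K"
proof -
  obtain N f where f: "V = f ` {..<N::nat}" "inj_on f {..<N}"
    using finite_imp_nat_seg_image_inj_on[OF assms(1)] by (auto simp: lessThan_def)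
  have "K x y = (\<Sum>i<N. K (f i) x / sqrt \<mu> * (K (f i) y / sqrt \<mu>))" if "x \<in> V" "y \<in> V" for x y
    using assms that f by (simp add: sum.reindex sum_divide_distrib[symmetric])
  then show ?thesis
    unfolding gram_kernel_def by (intro exI[of _ "{..<N}"] exI[of _ "\<lambda>i x. K (f i) x / sqrt \<mu>"]) auto
qed

lemma strongly_regularD:
  assumes "strongly_regular V E n p a c"
  shows "finite V" "card V = n" "V \<noteq> {}" "\<And>x. \<not> E x x" "\<And>x y. E x y \<longleftrightarrow> E y x"
    and "\<And>x. x \<in> V \<Longrightarrow> card {y \<in> V. E x y} = p"
    and "\<And>x y. x \<in> V \<Longrightarrow> y \<in> V \<Longrightarrow> E x y \<Longrightarrow> card {z \<in> V. E x z \<and> E y z} = a"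
    and "\<And>x y. x \<in> V \<Longrightarrow> y \<in> V \<Longrightarrow> x \<noteq> y \<Longrightarrow> \<not> E x y \<Longrightarrow> card {z \<in> V. E x z \<and> E y z} = c"
  using assms unfolding strongly_regular_def by auto

text \<open>The matrix u I + v A + w (J - I - A), where A is the adjacency matrix of E.\<close>

definition association_kernel :: "('a \<Rightarrow> 'a \<Rightarrow> bool) \<Rightarrow> real \<Rightarrow> real \<Rightarrow> real \<Rightarrow> 'a \<Rightarrow> 'a \<Rightarrow> real" where
  "association_kernel E u v w x y = (if y = x then u else if E x y then v else w)"

lemma gram_association_kernel_mult:
  assumes "gram_kernel V (association_kernel E u v w)" and "gram_kernel V (association_kernel E u' v' w')"
  shows "gram_kernel V (association_kernel E (u * u') (v * v') (w * w'))"
proof -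
  have "(\<lambda>x y. association_kernel E u v w x y * association_kernel E u' v' w' x y)
      = association_kernel E (u * u') (v * v') (w * w')"
    by (simp add: association_kernel_def fun_eq_iff)
  then show ?thesis using gram_kernel_mult[OF assms] by simp
qed

lemma gram_association_kernel_power:
  assumes "gram_kernel V (association_kernel E u v w)"
  shows "gram_kernel V (association_kernel E (u ^ k) (v ^ k) (w ^ k))"
proof -
  have "(\<lambda>x y. association_kernel E u v w x y ^ k) = association_kernel E (u ^ k) (v ^ k) (w ^ k)"
    by (simp add: association_kernel_def fun_eq_iff)
  then show ?thesis using gram_kernel_power[OF assms, of k] by simp
qed

lemma association_kernel_eq_linear_combination:
  assumes "\<not> E x x"
  shows "association_kernel E u v w x y = w + (u - w) * of_bool (x = y) + (v - w) * of_bool (E x y)"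
  using assms by (auto simp: association_kernel_def)

lemma strongly_regular_neighbours_sum:
  assumes "strongly_regular V E n p a c" and "x \<in> V"
  shows "(\<Sum>y\<in>V. of_bool (E x y)) = real p"
proof -
  have "V \<inter> {y. E x y} = {y \<in> V. E x y}" by blast
  then show ?thesis using strongly_regularD(1,6)[OF assms(1)] assms(2) by simp
qed

lemma strongly_regular_row_sum:
  assumes srg: "strongly_regular V E n p a c" and x: "x \<in> V"
  shows "(\<Sum>y\<in>V. association_kernel E u v w x y) = u + v * p + w * (real n - p - 1)"
proof -
  note G = strongly_regularD[OF srg]
  have "(\<Sum>y\<in>V. association_kernel E u v w x y)
      = (\<Sum>y\<in>V. w + (u - w) * of_bool (x = y) + (v - w) * of_bool (E x y))"
    using G(4) by (simp add: association_kernel_eq_linear_combination)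
  also have "\<dots> = real n * w + (u - w) + (v - w) * p"
    using G(1,2) x strongly_regular_neighbours_sum[OF srg x]
    by (simp add: sum.distrib sum_distrib_left[symmetric])
  finally show ?thesis by (simp add: algebra_simps)
qed

lemma strongly_regular_common_neighbours_sum:
  assumes srg: "strongly_regular V E n p a c" and "x \<in> V" "y \<in> V"
  shows "(\<Sum>z\<in>V. of_bool (E z x) * of_bool (E z y)) = association_kernel E p a c x y"
proof -
  note G = strongly_regularD[OF srg]
  have "(\<Sum>z\<in>V. of_bool (E z x) * of_bool (E z y)) = real (card {z \<in> V. E x z \<and> E y z})"
  proof -
    have "V \<inter> {z. E z x \<and> E z y} = {z \<in> V. E x z \<and> E y z}" using G(5) by blast
    then show ?thesis using G(1) by (simp flip: of_bool_conj)
  qed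
  then show ?thesis
    using G(4,6-8) assms(2,3) by (auto simp: association_kernel_def)
qed

lemma strongly_regular_parameter_identity:
  assumes srg: "strongly_regular V E n p a c"
  shows "real p * p = p + a * p + c * (real n - p - 1)"
proof -
  note G = strongly_regularD[OF srg]
  obtain x where x: "x \<in> V" using G(3) by blast
  have "(\<Sum>y\<in>V. association_kernel E p a c x y) = (\<Sum>y\<in>V. \<Sum>z\<in>V. of_bool (E z x) * of_bool (E z y))"
    using strongly_regular_common_neighbours_sum[OF srg x] by simp
  also have "\<dots> = (\<Sum>z\<in>V. of_bool (E z x) * (\<Sum>y\<in>V. of_bool (E z y)))"
    unfolding sum_distrib_left by (rule sum.swap)
  also have "\<dots> = (\<Sum>z\<in>V. of_bool (E x z) * real p)"
    using strongly_regular_neighbours_sum[OF srg] G(5) by (intro sum.cong) auto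
  also have "\<dots> = real p * p"
    using strongly_regular_neighbours_sum[OF srg x] by (simp add: sum_distrib_right[symmetric])
  finally show ?thesis
    using strongly_regular_row_sum[OF srg x] by (simp add: algebra_simps)
qed

lemma strongly_regular_kernel_square:
  fixes \<gamma> \<alpha> \<beta> :: real
  assumes srg: "strongly_regular V E n p a c" and x: "x \<in> V" and y: "y \<in> V"
  shows "(\<Sum>z\<in>V. (\<gamma> + \<alpha> * of_bool (z = x) + \<beta> * of_bool (E z x))
                  * (\<gamma> + \<alpha> * of_bool (z = y) + \<beta> * of_bool (E z y)))
    = (n * \<gamma>\<^sup>2 + 2 * \<gamma> * \<alpha> + 2 * \<gamma> * \<beta> * p + \<beta>\<^sup>2 * c)
      + (\<alpha>\<^sup>2 + \<beta>\<^sup>2 * (real p - c)) * of_bool (x = y) + (2 * \<alpha> * \<beta> + \<beta>\<^sup>2 * (real a - c)) * of_bool (E x y)"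
proof -
  note G = strongly_regularD[OF srg]
  have deg: "(\<Sum>z\<in>V. of_bool (E z w)) = real p" if "w \<in> V" for w
    using strongly_regular_neighbours_sum[OF srg that] G(5) by simp
  have common: "(\<Sum>z\<in>V. of_bool (E z x) * of_bool (E z y))
      = c + (real p - c) * of_bool (x = y) + (real a - c) * of_bool (E x y)"
    using strongly_regular_common_neighbours_sum[OF srg x y] G(4)
    by (simp add: association_kernel_eq_linear_combination algebra_simps)
  have "(\<Sum>z\<in>V. (\<gamma> + \<alpha> * of_bool (z = x) + \<beta> * of_bool (E z x))
                  * (\<gamma> + \<alpha> * of_bool (z = y) + \<beta> * of_bool (E z y)))
    = (\<Sum>z\<in>V. \<gamma>\<^sup>2 + \<gamma> * \<alpha> * of_bool (z = y) + \<gamma> * \<beta> * of_bool (E z y)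
        + \<alpha> * \<gamma> * of_bool (z = x) + \<alpha>\<^sup>2 * (of_bool (z = x) * of_bool (z = y))
        + \<alpha> * \<beta> * (of_bool (z = x) * of_bool (E z y)) + \<beta> * \<gamma> * of_bool (E z x)
        + \<beta> * \<alpha> * (of_bool (z = y) * of_bool (E z x)) + \<beta>\<^sup>2 * (of_bool (E z x) * of_bool (E z y)))"
    by (intro sum.cong) (auto simp: algebra_simps power2_eq_square)
  also have "\<dots> = n * \<gamma>\<^sup>2 + \<gamma> * \<alpha> + \<gamma> * \<beta> * p + \<alpha> * \<gamma> + \<alpha>\<^sup>2 * of_bool (x = y)
        + \<alpha> * \<beta> * of_bool (E x y) + \<beta> * \<gamma> * p + \<beta> * \<alpha> * of_bool (E y x)
        + \<beta>\<^sup>2 * (\<Sum>z\<in>V. of_bool (E z x) * of_bool (E z y))"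
  proof -
    have "(\<Sum>z\<in>V. of_bool (z = x)) = (1::real)" "(\<Sum>z\<in>V. of_bool (z = y)) = (1::real)"
      using sum_delta_of_bool[OF G(1) x, of "\<lambda>_. 1"] sum_delta_of_bool[OF G(1) y, of "\<lambda>_. 1"] by simp_all
    then show ?thesis
      using G(2) deg[OF x] deg[OF y]
        sum_delta_of_bool[OF G(1) x, of "\<lambda>z. of_bool (z = y) :: real"]
        sum_delta_of_bool[OF G(1) x, of "\<lambda>z. of_bool (E z y) :: real"]
        sum_delta_of_bool[OF G(1) y, of "\<lambda>z. of_bool (E z x) :: real"]
      by (simp only: sum.distrib sum_distrib_left[symmetric] sum_constant mult_1_right)
  qed
  finally show ?thesis
    using common G(5) by (simp add: algebra_simps power2_eq_square)
qed

lemma strongly_regular_kernel_gram: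
  fixes \<gamma> \<alpha> \<beta> \<mu> :: real
  assumes srg: "strongly_regular V E n p a c" and "0 < \<mu>"
    and "n * \<gamma>\<^sup>2 + 2 * \<gamma> * \<alpha> + 2 * \<gamma> * \<beta> * p + \<beta>\<^sup>2 * c = \<mu> * \<gamma>"
    and "\<alpha>\<^sup>2 + \<beta>\<^sup>2 * (real p - c) = \<mu> * \<alpha>"
    and "2 * \<alpha> * \<beta> + \<beta>\<^sup>2 * (real a - c) = \<mu> * \<beta>"
  shows "gram_kernel V (association_kernel E (\<gamma> + \<alpha>) (\<gamma> + \<beta>) \<gamma>)"
proof -
  have K: "association_kernel E (\<gamma> + \<alpha>) (\<gamma> + \<beta>) \<gamma> x y = \<gamma> + \<alpha> * of_bool (x = y) + \<beta> * of_bool (E x y)"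
    for x y
    using strongly_regularD(4)[OF srg] by (simp add: association_kernel_eq_linear_combination)
  show ?thesis
  proof (rule gram_kernel_if_square_eq[OF strongly_regularD(1)[OF srg] \<open>0 < \<mu>\<close>])
    fix x y assume "x \<in> V" "y \<in> V"
    then show "(\<Sum>z\<in>V. association_kernel E (\<gamma> + \<alpha>) (\<gamma> + \<beta>) \<gamma> z x * association_kernel E (\<gamma> + \<alpha>) (\<gamma> + \<beta>) \<gamma> z y)
        = \<mu> * association_kernel E (\<gamma> + \<alpha>) (\<gamma> + \<beta>) \<gamma> x y"
      unfolding K strongly_regular_kernel_square[OF srg \<open>x \<in> V\<close> \<open>y \<in> V\<close>] assms(3-5) by (simp add: algebra_simps)
  qed
qed

lemma strongly_regular_gram_kernel_sum_nonneg:
  assumes srg: "strongly_regular V E n p a c" and "gram_kernel V (association_kernel E u v w)"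
  shows "0 \<le> u + v * p + w * (real n - p - 1)"
proof -
  note G = strongly_regularD[OF srg]
  have "0 < n"
    using G(1-3) by (simp flip: G(2) add: card_gt_0_iff)
  have "0 \<le> (\<Sum>x\<in>V. \<Sum>y\<in>V. association_kernel E u v w x y)"
    using gram_kernel_sum_nonneg[OF G(1) assms(2)] .
  also have "\<dots> = real n * (u + v * p + w * (real n - p - 1))"
    using G(2) strongly_regular_row_sum[OF srg] by simp
  finally show ?thesis
    using \<open>0 < n\<close> by (simp add: zero_le_mult_iff)
qed

text \<open>The three kernels are n (r - s) times the orthogonal projections onto the s-eigenspace,
onto the all-ones vector plus the s-eigenspace, and onto the r-eigenspace of the adjacency matrix.\<close>

lemma strongly_regular_eigen_kernels_gram:
  assumes srg: "strongly_regular V E n p a c"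
    and sum: "r + s = real a - c" and prod: "r * s = real c - p" and "s < r"
  shows "gram_kernel V (association_kernel E (r * n + p - r) (- real n + p - r) (p - r))"
    and "gram_kernel V (association_kernel E (r * n + p - s) (- real n + p - s) (p - s))"
    and "gram_kernel V (association_kernel E (- s * n + s - p) (real n + s - p) (s - p))"
proof -
  have nc: "real n * c = (p - r) * (p - s)"
    using strongly_regular_parameter_identity[OF srg] sum prod by algebra
  have \<mu>: "0 < real n * (r - s)"
    using strongly_regularD(1-3)[OF srg] \<open>s < r\<close> by (simp add: card_gt_0_iff flip: strongly_regularD(2)[OF srg])
  note gram = strongly_regular_kernel_gram[OF srg \<mu>]
  have "gram_kernel V (association_kernel E ((p - r) + r * n) ((p - r) + - real n) (p - r))"
    by (rule gram) (use nc sum prod in algebra)+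
  then show "gram_kernel V (association_kernel E (r * n + p - r) (- real n + p - r) (p - r))"
    by (simp add: algebra_simps)
  have "gram_kernel V (association_kernel E ((p - s) + r * n) ((p - s) + - real n) (p - s))"
    by (rule gram) (use nc sum prod in algebra)+
  then show "gram_kernel V (association_kernel E (r * n + p - s) (- real n + p - s) (p - s))"
    by (simp add: algebra_simps)
  have "gram_kernel V (association_kernel E ((s - p) + - s * n) ((s - p) + real n) (s - p))"
    by (rule gram) (use nc sum prod in algebra)+
  then show "gram_kernel V (association_kernel E (- s * n + s - p) (real n + s - p) (s - p))"
    by (simp add: algebra_simps)
qed

theorem mainTheorem3:
  fixes V :: "'a set" and E :: "'a \<Rightarrow> 'a \<Rightarrow> bool" and n p a c :: nat and r s :: real
  assumes srg: "strongly_regular V E n p a c"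
    and hc: "0 < c" and hcp: "c < p" and hpn: "p < n - 1"
    and r_def: "r = (real a - real c + sqrt ((real a - real c)^2 + 4 * (real p - real c))) / 2"
    and s_def: "s = (real a - real c - sqrt ((real a - real c)^2 + 4 * (real p - real c))) / 2"
  shows "(\<forall>k::nat. odd k \<longrightarrow>
            (r * n + p - r)^k + (- real n + p - r)^k * p + (p - r)^k * (real n - p - 1) \<ge> 0)
       \<and> (\<forall>k::nat. odd k \<longrightarrow>
            (r * n + p - s)^k + (- real n + p - s)^k * p + (p - s)^k * (real n - p - 1) \<ge> 0)
       \<and> (\<forall>k l::nat. 0 < k \<and> 0 < l \<and> odd (k + l) \<longrightarrow>
            (r * n + p - r)^k * (r * n + p - s)^l + (- real n + p - r)^k * (- real n + p - s)^l * p
            + (p - r)^k * (p - s)^l * (real n - p - 1) \<ge> 0)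
       \<and> (\<forall>k l::nat. 0 < k \<and> odd l \<longrightarrow>
            (\<bar>s\<bar> * n + s - p)^k * (r * n + p - s)^l + (real n + s - p)^k * (- real n + p - s)^l * p
            + (s - p)^k * (p - s)^l * (real n - p - 1) \<ge> 0)"
proof -
  have "0 < real p - real c" using hcp by simp
  note roots = quadratic_roots_sum_prod[OF this, of "real a - real c", folded r_def s_def]
  then have "r + s = real a - c" "r * s = real c - p" "s < r" by simp_all
  note K = strongly_regular_eigen_kernels_gram[OF srg this]
  have K3: "gram_kernel V (association_kernel E (\<bar>s\<bar> * n + s - p) (real n + s - p) (s - p))"
    using K(3) roots(4) by simp
  note nonneg = strongly_regular_gram_kernel_sum_nonneg[OF srg]
  note power = gram_association_kernel_power
  show ?thesis
    using nonneg[OF power[OF K(1)]] nonneg[OF power[OF K(2)]]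
      nonneg[OF gram_association_kernel_mult[OF power[OF K(1)] power[OF K(2)]]]
      nonneg[OF gram_association_kernel_mult[OF power[OF K3] power[OF K(2)]]]
    by blast
qed

end
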